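(* For all integers $k\ge1$ and $t\ge2$, $\Pr_{G\sim G(n,1/2)}[\theta^t(G)\not\models\mathrm{EA}^t_k]=\mathrm{negl}(n)$.
   Context: $G(n,1/2)$ is the uniform distribution over simple graphs on $[n]$. For a graph $G$, $\theta^t(G)$ is the $t$-hypergraph on $V(G)$ defined by the $\mathrm{FO}[\oplus]$ formula $\theta^t(x_1,\dots,x_t)=\oplus y\,\bigwedge_{i=1}^t E(y,x_i)$: a $t$-element set $\{v_1,\dots,v_t\}$ is a hyperedge iff the number of vertices $y$ adjacent to all of $v_1,\dots,v_t$ is odd. A $t$-hypergraph satisfies $\mathrm{EA}^t_k$ if for every vertex set $S$ of size $k$ and every $T\subseteq\binom{S}{t-1}$ there exists $v\notin S$ such that for every $\{s_1,\dots,s_{t-1}\}\in\binom{S}{t-1}$, $\{s_1,\dots,s_{t-1},v\}$ is a hyperedge iff $\{s_1,\dots,s_{t-1}\}\in T$. Negligible means eventually below $1/p(n)$ for every polynomial $p$. *)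

theory Defs
  imports Complex_Main
begin

definition vpairs :: "nat \<Rightarrow> nat set set" where
  "vpairs n = {e. e \<subseteq> {0..<n} \<and> card e = 2}"

definition graphs :: "nat \<Rightarrow> nat set set set" where
  "graphs n = Pow (vpairs n)"

definition adj :: "nat set set \<Rightarrow> nat \<Rightarrow> nat \<Rightarrow> bool" where
  "adj G x y \<longleftrightarrow> {x, y} \<in> G"

definition theta :: "nat \<Rightarrow> nat \<Rightarrow> nat set set \<Rightarrow> nat set set" where
  "theta t n G = {X. X \<subseteq> {0..<n} \<and> card X = t \<and>
      odd (card {y \<in> {0..<n}. \<forall>x\<in>X. adj G y x})}"

definition EA :: "nat \<Rightarrow> nat \<Rightarrow> nat set \<Rightarrow> nat set set \<Rightarrow> bool" where
  "EA t k V H \<longleftrightarrow>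
     (\<forall>S. S \<subseteq> V \<longrightarrow> card S = k \<longrightarrow>
       (\<forall>T. T \<subseteq> {U. U \<subseteq> S \<and> card U = t - 1} \<longrightarrow>
         (\<exists>v\<in>V - S. \<forall>U. U \<subseteq> S \<longrightarrow> card U = t - 1 \<longrightarrow>
              (insert v U \<in> H \<longleftrightarrow> U \<in> T))))"

text \<open>Probability under G(n,1/2) (uniform over all simple graphs on [n])
that theta^t(G) fails EA^t_k.\<close>

definition fail_prob :: "nat \<Rightarrow> nat \<Rightarrow> nat \<Rightarrow> real" where
  "fail_prob t k n =
     real (card {G \<in> graphs n. \<not> EA t k {0..<n} (theta t n G)}) / real (card (graphs n))"

definition negligible :: "(nat \<Rightarrow> real) \<Rightarrow> bool" where
  "negligible f \<longleftrightarrow> (\<forall>c::nat. \<forall>\<^sub>F n in sequentially. \<bar>f n\<bar> < 1 / real n ^ c)"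

end

theory Submission
  imports Defs
begin

text \<open>
  Fix a \<open>k\<close>-set \<open>S\<close> and a target \<open>T\<close>, and split the remaining vertices into halves
  \<open>W\<close> and \<open>R\<close>. Except with probability \<open>2^k (1 - 2^-k)^|R|\<close>, every \<open>(t-1)\<close>-subset
  \<open>U\<close> of \<open>S\<close> is the trace \<open>N(y) \<inter> S\<close> of some witness \<open>y = f U\<close> in \<open>R\<close>. Conditioned
  on all edges except those between \<open>W\<close> and \<open>R\<close>, the vertices of \<open>W\<close> are then
  independent, and each is an extension vertex for \<open>(S, T)\<close> with probability at least
  \<open>2^-2^k\<close>: the edge \<open>{v, f U}\<close> changes the parity of the common neighbourhood of
  \<open>{v} \<union> U\<close> and of no other \<open>(t-1)\<close>-subset, so for every choice of the remaining edges
  at \<open>v\<close> one choice of the edges to the witnesses corrects all parities. Hence \<open>(S, T)\<close>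
  fails with probability exponentially small in \<open>n\<close>, and a union bound over the at most
  \<open>n^k 2^2^k\<close> pairs \<open>(S, T)\<close> leaves a negligible failure probability.
\<close>

section \<open>Counting subsets of a finite set\<close>

lemma card_Pow_filter_split:
  assumes "finite E" "F \<subseteq> E"
  shows "card {G \<in> Pow E. P G} = (\<Sum>A\<in>Pow F. card {B \<in> Pow (E - F). P (A \<union> B)})"
proof -
  let ?S = "SIGMA A:Pow F. {B \<in> Pow (E - F). P (A \<union> B)}"
  have "{G \<in> Pow E. P G} = (\<lambda>(A, B). A \<union> B) ` ?S"
  proof (intro equalityI subsetI)
    fix G assume G: "G \<in> {G \<in> Pow E. P G}"
    have split: "G \<inter> F \<union> (G - F) = G" by blast
    have "(G \<inter> F, G - F) \<in> ?S" using G by (simp add: split) blast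
    then show "G \<in> (\<lambda>(A, B). A \<union> B) ` ?S"
      by (rule image_eqI[where x = "(G \<inter> F, G - F)", rotated]) (simp add: split)
  qed (use assms in auto)
  moreover have "inj_on (\<lambda>(A, B). A \<union> B) ?S"
    by (rule inj_onI, clarify) blast
  ultimately have "card {G \<in> Pow E. P G} = card ?S"
    by (simp add: card_image)
  also have "\<dots> = (\<Sum>A\<in>Pow F. card {B \<in> Pow (E - F). P (A \<union> B)})"
    using assms by (intro card_SigmaI) (auto intro: finite_subset)
  finally show ?thesis .
qed

lemma card_Pow_filter_UN_disjoint:
  assumes "finite W" "\<And>v. v \<in> W \<Longrightarrow> finite (D v)"
    and "\<And>v w. v \<in> W \<Longrightarrow> w \<in> W \<Longrightarrow> v \<noteq> w \<Longrightarrow> D v \<inter> D w = {}"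
  shows "card {B \<in> Pow (\<Union>v\<in>W. D v). \<forall>v\<in>W. Q v (B \<inter> D v)}
       = (\<Prod>v\<in>W. card {C \<in> Pow (D v). Q v C})"
  using assms
proof (induction W rule: finite_induct)
  case empty
  then show ?case by simp
next
  case (insert w W)
  let ?U = "\<Union>v\<in>W. D v"
  let ?N = "card {B \<in> Pow ?U. \<forall>v\<in>W. Q v (B \<inter> D v)}"
  have disj: "D w \<inter> D v = {}" if "v \<in> W" for v
    using insert.hyps(2) insert.prems(2) that by (metis insertCI)
  have fin: "finite (D w \<union> ?U)" using insert by auto
  have "card {B \<in> Pow (D w \<union> ?U). \<forall>v\<in>insert w W. Q v (B \<inter> D v)}
      = (\<Sum>C\<in>Pow (D w). card {B \<in> Pow (D w \<union> ?U - D w). \<forall>v\<in>insert w W. Q v ((C \<union> B) \<inter> D v)})"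
    using fin by (intro card_Pow_filter_split) auto
  also have "\<dots> = (\<Sum>C\<in>Pow (D w). if Q w C then ?N else 0)"
  proof (rule sum.cong[OF refl])
    fix C assume C: "C \<in> Pow (D w)"
    have "D w \<union> ?U - D w = ?U" using disj by blast
    moreover have "(C \<union> B) \<inter> D w = C" if "B \<subseteq> ?U" for B
      using C disj that by blast
    moreover have "(C \<union> B) \<inter> D v = B \<inter> D v" if "v \<in> W" for B v
      using C disj[OF that] by blast
    ultimately have "{B \<in> Pow (D w \<union> ?U - D w). \<forall>v\<in>insert w W. Q v ((C \<union> B) \<inter> D v)}
        = (if Q w C then {B \<in> Pow ?U. \<forall>v\<in>W. Q v (B \<inter> D v)} else {})"
      by auto
    then show "card {B \<in> Pow (D w \<union> ?U - D w). \<forall>v\<in>insert w W. Q v ((C \<union> B) \<inter> D v)}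
        = (if Q w C then ?N else 0)"
      by simp
  qed
  also have "\<dots> = card {C \<in> Pow (D w). Q w C} * ?N"
    using insert.prems(1) by (simp add: sum.If_cases Int_def)
  also have "\<dots> = (\<Prod>v\<in>insert w W. card {C \<in> Pow (D v). Q v C})"
    using insert by simp
  finally show ?case by simp
qed

lemma card_Pow_filter_add_compl:
  "finite D \<Longrightarrow> card {C \<in> Pow D. Q C} + card {C \<in> Pow D. \<not> Q C} = 2 ^ card D"
proof -
  assume "finite D"
  then have "card {C \<in> Pow D. Q C} + card {C \<in> Pow D. \<not> Q C}
      = card ({C \<in> Pow D. Q C} \<union> {C \<in> Pow D. \<not> Q C})"
    by (intro card_Un_disjoint[symmetric]) auto
  also have "{C \<in> Pow D. Q C} \<union> {C \<in> Pow D. \<not> Q C} = Pow D" by blast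
  finally show ?thesis using \<open>finite D\<close> by (simp add: card_Pow)
qed

lemma card_Pow_none_UN_le:
  fixes p :: real
  assumes "finite W" and finD: "\<And>v. v \<in> W \<Longrightarrow> finite (D v)"
    and disj: "\<And>v w. v \<in> W \<Longrightarrow> w \<in> W \<Longrightarrow> v \<noteq> w \<Longrightarrow> D v \<inter> D w = {}"
    and likely: "\<And>v. v \<in> W \<Longrightarrow> p * 2 ^ card (D v) \<le> card {C \<in> Pow (D v). P v C}"
  shows "card {B \<in> Pow (\<Union>v\<in>W. D v). \<forall>v\<in>W. \<not> P v (B \<inter> D v)}
    \<le> (1 - p) ^ card W * 2 ^ card (\<Union>v\<in>W. D v)"
proof -
  have "card {B \<in> Pow (\<Union>v\<in>W. D v). \<forall>v\<in>W. \<not> P v (B \<inter> D v)}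
      = (\<Prod>v\<in>W. real (card {C \<in> Pow (D v). \<not> P v C}))"
    using card_Pow_filter_UN_disjoint[OF \<open>finite W\<close> finD disj, where Q = "\<lambda>v C. \<not> P v C"]
    by (simp add: of_nat_prod)
  also have "\<dots> \<le> (\<Prod>v\<in>W. (1 - p) * 2 ^ card (D v))"
  proof (rule prod_mono)
    fix v assume v: "v \<in> W"
    have "real (card {C \<in> Pow (D v). P v C}) + card {C \<in> Pow (D v). \<not> P v C} = 2 ^ card (D v)"
      using arg_cong[OF card_Pow_filter_add_compl[OF finD[OF v]], of real] by simp
    then show "0 \<le> real (card {C \<in> Pow (D v). \<not> P v C}) \<and>
        real (card {C \<in> Pow (D v). \<not> P v C}) \<le> (1 - p) * 2 ^ card (D v)"
      using likely[OF v] by (simp add: algebra_simps)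
  qed
  also have "\<dots> = (1 - p) ^ card W * 2 ^ card (\<Union>v\<in>W. D v)"
    using assms by (simp add: prod.distrib card_UN_disjoint power_sum)
  finally show ?thesis .
qed

text \<open>
  Counting form of conditional independence: given the edges in \<open>F\<close>, the events
  \<open>P v\<close> depend on the disjoint blocks \<open>D v\<close>, and each has conditional probability
  at least \<open>p\<close>.
\<close>

lemma card_Pow_all_fail_le:
  fixes D :: "'i \<Rightarrow> 'e set" and p :: real
  assumes "finite E" "finite W" and DE: "\<And>v. v \<in> W \<Longrightarrow> D v \<subseteq> E"
    and disj: "\<And>v w. v \<in> W \<Longrightarrow> w \<in> W \<Longrightarrow> v \<noteq> w \<Longrightarrow> D v \<inter> D w = {}"
    and F: "F = E - (\<Union>v\<in>W. D v)"
    and local: "\<And>v G. v \<in> W \<Longrightarrow> G \<subseteq> E \<Longrightarrow> P v G = P v (G \<inter> (F \<union> D v))"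
    and likely: "\<And>v A. v \<in> W \<Longrightarrow> A \<subseteq> F \<Longrightarrow> Q A \<Longrightarrow>
                   p * 2 ^ card (D v) \<le> card {C \<in> Pow (D v). P v (A \<union> C)}"
    and "p \<le> 1"
  shows "card {G \<in> Pow E. Q (G \<inter> F) \<and> (\<forall>v\<in>W. \<not> P v G)} \<le> (1 - p) ^ card W * 2 ^ card E"
proof -
  let ?U = "\<Union>v\<in>W. D v"
  let ?K = "(1 - p) ^ card W * 2 ^ card ?U :: real"
  have finD: "finite (D v)" if "v \<in> W" for v
    using DE that \<open>finite E\<close> finite_subset by blast
  have FE: "F \<subseteq> E" and EF: "E - F = ?U" and finF: "finite F"
    using F DE \<open>finite E\<close> by auto
  have cardE: "card E = card F + card ?U"
    using \<open>finite E\<close> FE EF card_Diff_subset[OF finF FE] card_mono[OF \<open>finite E\<close> FE] by simp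
  have restrict: "(A \<union> B) \<inter> F = A" if "A \<subseteq> F" "B \<subseteq> E - F" for A B
    using that by blast
  have fiber: "card {B \<in> Pow (E - F). Q ((A \<union> B) \<inter> F) \<and> (\<forall>v\<in>W. \<not> P v (A \<union> B))} \<le> ?K"
    if A: "A \<subseteq> F" for A
  proof (cases "Q A")
    case False
    then have "{B \<in> Pow (E - F). Q ((A \<union> B) \<inter> F) \<and> (\<forall>v\<in>W. \<not> P v (A \<union> B))} = {}"
      using restrict[OF A] by auto
    then have "card {B \<in> Pow (E - F). Q ((A \<union> B) \<inter> F) \<and> (\<forall>v\<in>W. \<not> P v (A \<union> B))} = 0"
      by (simp only: card.empty)
    then show ?thesis using \<open>p \<le> 1\<close> by simp
  next
    case True
    have "P v (A \<union> B) = P v (A \<union> (B \<inter> D v))" if "B \<subseteq> ?U" "v \<in> W" for B v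
    proof -
      have "(A \<union> B) \<inter> (F \<union> D v) = A \<union> (B \<inter> D v)" using A that F by blast
      moreover have "A \<union> B \<subseteq> E" using A FE that DE by blast
      ultimately show ?thesis using local that(2) by metis
    qed
    then have "{B \<in> Pow (E - F). Q ((A \<union> B) \<inter> F) \<and> (\<forall>v\<in>W. \<not> P v (A \<union> B))}
        = {B \<in> Pow ?U. \<forall>v\<in>W. \<not> P v (A \<union> (B \<inter> D v))}"
      using True EF restrict[OF A] by auto
    also have "real (card \<dots>) \<le> ?K"
      using \<open>finite W\<close> finD disj likely[OF _ A True] by (rule card_Pow_none_UN_le)
    finally show ?thesis .
  qed
  have "card {G \<in> Pow E. Q (G \<inter> F) \<and> (\<forall>v\<in>W. \<not> P v G)}
      = (\<Sum>A\<in>Pow F. real (card {B \<in> Pow (E - F). Q ((A \<union> B) \<inter> F) \<and> (\<forall>v\<in>W. \<not> P v (A \<union> B))}))"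
    using card_Pow_filter_split[OF \<open>finite E\<close> FE] by (simp flip: of_nat_sum)
  also have "\<dots> \<le> (\<Sum>A\<in>Pow F. ?K)"
    using fiber by (intro sum_mono) blast
  also have "\<dots> = (1 - p) ^ card W * 2 ^ card E"
    using finF by (simp add: card_Pow cardE power_add)
  finally show ?thesis .
qed

lemma card_le_union_bound:
  fixes b :: real
  assumes "finite I" "\<And>i. i \<in> I \<Longrightarrow> finite (A i)" "X \<subseteq> (\<Union>i\<in>I. A i)"
    and "\<And>i. i \<in> I \<Longrightarrow> card (A i) \<le> b"
  shows "card X \<le> card I * b"
proof -
  have "card X \<le> card (\<Union>i\<in>I. A i)"
    using assms(1-3) by (intro card_mono) auto
  also have "\<dots> \<le> (\<Sum>i\<in>I. card (A i))"
    using assms(1) by (rule card_UN_le)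
  finally have "card X \<le> (\<Sum>i\<in>I. real (card (A i)))"
    by (simp flip: of_nat_sum)
  also have "\<dots> \<le> card I * b"
    using assms(4) by (rule sum_bounded_above)
  finally show ?thesis .
qed

lemma half_power_mult_le:
  assumes "b \<le> a" "b \<le> d"
  shows "(1/2::real) ^ a * 2 ^ d \<le> 2 ^ (d - b)"
proof -
  have "(1/2::real) ^ a * 2 ^ d \<le> (1/2) ^ b * 2 ^ d"
    using assms(1) by (intro mult_right_mono power_decreasing) auto
  also have "\<dots> = (1/2) ^ b * (2 ^ b * 2 ^ (d - b))"
    using assms(2) by (simp flip: power_add)
  also have "\<dots> = 2 ^ (d - b)"
    by (simp add: power_one_over)
  finally show ?thesis .
qed

section \<open>Stars, traces and extension vertices\<close>

lemma doubleton_in_vpairs_iff: "{a, b} \<in> vpairs n \<longleftrightarrow> a < n \<and> b < n \<and> a \<noteq> b"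
  by (auto simp: vpairs_def card_insert_if)

lemma finite_vpairs: "finite (vpairs n)"
  unfolding vpairs_def by (rule finite_subset[of _ "Pow {0..<n}"]) auto

lemma card_graphs: "card (graphs n) = 2 ^ card (vpairs n)"
  by (simp add: graphs_def card_Pow finite_vpairs)

definition star :: "nat \<Rightarrow> nat set \<Rightarrow> nat set set" where
  "star v X = (\<lambda>y. {v, y}) ` X"

lemma doubleton_in_star_iff: "{v, y} \<in> star v X \<longleftrightarrow> y \<in> X"
  by (auto simp: star_def doubleton_eq_iff)

lemma star_subset_vpairs: "v < n \<Longrightarrow> v \<notin> X \<Longrightarrow> X \<subseteq> {0..<n} \<Longrightarrow> star v X \<subseteq> vpairs n"
  by (auto simp: star_def doubleton_in_vpairs_iff)

lemma star_disjoint: "v \<noteq> w \<Longrightarrow> v \<notin> X \<Longrightarrow> star v X \<inter> star w X = {}"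
  by (auto simp: star_def doubleton_eq_iff)

lemma finite_star: "finite X \<Longrightarrow> finite (star v X)"
  by (simp add: star_def)

lemma card_star_le: "finite X \<Longrightarrow> card (star v X) \<le> card X"
  unfolding star_def by (rule card_image_le)

lemma theta_cong:
  assumes "\<And>y x. x \<in> X \<Longrightarrow> adj G y x \<longleftrightarrow> adj H y x"
  shows "X \<in> theta t n G \<longleftrightarrow> X \<in> theta t n H"
proof -
  have "{y \<in> {0..<n}. \<forall>x\<in>X. adj G y x} = {y \<in> {0..<n}. \<forall>x\<in>X. adj H y x}"
    using assms by blast
  then show ?thesis by (simp add: theta_def)
qed

definition realizes :: "nat set set \<Rightarrow> nat set \<Rightarrow> nat \<Rightarrow> nat set \<Rightarrow> bool" where
  "realizes G S y U \<longleftrightarrow> (\<forall>x\<in>S. adj G y x \<longleftrightarrow> x \<in> U)"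

definition traces_realized :: "nat set set \<Rightarrow> nat set \<Rightarrow> nat set \<Rightarrow> nat \<Rightarrow> bool" where
  "traces_realized G S R j \<longleftrightarrow> (\<forall>U. U \<subseteq> S \<and> card U = j \<longrightarrow> (\<exists>y\<in>R. realizes G S y U))"

definition extension_vertex ::
    "nat \<Rightarrow> nat \<Rightarrow> nat set set \<Rightarrow> nat set \<Rightarrow> nat set set \<Rightarrow> nat \<Rightarrow> bool" where
  "extension_vertex t n G S T v \<longleftrightarrow>
     (\<forall>U. U \<subseteq> S \<longrightarrow> card U = t - 1 \<longrightarrow> (insert v U \<in> theta t n G \<longleftrightarrow> U \<in> T))"

lemma realizes_cong:
  "(\<And>x. x \<in> S \<Longrightarrow> adj G y x \<longleftrightarrow> adj H y x) \<Longrightarrow> realizes G S y U \<longleftrightarrow> realizes H S y U"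
  by (simp add: realizes_def)

lemma realizes_Un_star_iff:
  assumes "Ob \<subseteq> star v X" "y \<noteq> v" "v \<notin> S"
  shows "realizes (A \<union> Ob) S y U \<longleftrightarrow> realizes A S y U"
  by (rule realizes_cong) (use assms in \<open>auto simp: adj_def star_def doubleton_eq_iff\<close>)

lemma traces_realized_cong:
  "(\<And>y x. y \<in> R \<Longrightarrow> x \<in> S \<Longrightarrow> adj G y x \<longleftrightarrow> adj H y x) \<Longrightarrow>
     traces_realized G S R j \<longleftrightarrow> traces_realized H S R j"
  unfolding traces_realized_def realizes_def by simp

lemma extension_vertex_cong:
  "(\<And>y x. x \<in> insert v S \<Longrightarrow> adj G y x \<longleftrightarrow> adj H y x) \<Longrightarrow>
     extension_vertex t n G S T v \<longleftrightarrow> extension_vertex t n H S T v"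
proof -
  assume "\<And>y x. x \<in> insert v S \<Longrightarrow> adj G y x \<longleftrightarrow> adj H y x"
  then have "insert v U \<in> theta t n G \<longleftrightarrow> insert v U \<in> theta t n H" if "U \<subseteq> S" for U
    using that by (intro theta_cong) blast
  then show ?thesis by (simp add: extension_vertex_def)
qed

section \<open>Parity flips at an extension vertex\<close>

text \<open>
  Since \<open>f U'\<close> realizes the trace \<open>U'\<close> on \<open>S\<close>, the new neighbour \<open>f U'\<close> of \<open>v\<close> is a
  common neighbour of \<open>insert v U\<close> exactly when \<open>U' = U\<close>.
\<close>

lemma common_neighbours_add_star:
  assumes "finite S" "v \<notin> S" "U \<subseteq> S" "card U = t - 1"
    and Fl: "\<And>U'. U' \<in> Fl \<Longrightarrow> U' \<subseteq> S \<and> card U' = t - 1"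
    and f: "\<And>U'. U' \<in> Fl \<Longrightarrow> f U' < n \<and> f U' \<notin> S \<and> \<not> adj G (f U') v \<and> realizes G S (f U') U'"
  shows "{y \<in> {0..<n}. \<forall>x\<in>insert v U. adj (G \<union> star v (f ` Fl)) y x}
       = {y \<in> {0..<n}. \<forall>x\<in>insert v U. adj G y x} \<union> (if U \<in> Fl then {f U} else {})"
proof -
  let ?H = "G \<union> star v (f ` Fl)"
  have adj_U: "adj ?H y x \<longleftrightarrow> adj G y x" if "x \<in> U" for y x
  proof -
    have "x \<noteq> v" "x \<notin> f ` Fl" using that assms by auto
    then have "{y, x} \<notin> star v (f ` Fl)"
      by (auto simp: star_def doubleton_eq_iff)
    then show ?thesis by (simp add: adj_def)
  qed
  have adj_v: "adj ?H y v \<longleftrightarrow> adj G y v \<or> y \<in> f ` Fl" for y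
    using doubleton_in_star_iff[of v y "f ` Fl"] by (simp add: adj_def insert_commute)
  have trace: "(\<forall>x\<in>U. adj G (f U') x) \<longleftrightarrow> U' = U" if "U' \<in> Fl" for U'
  proof -
    have "(\<forall>x\<in>U. adj G (f U') x) \<longleftrightarrow> U \<subseteq> U'"
      using f[OF that] \<open>U \<subseteq> S\<close> unfolding realizes_def by blast
    also have "\<dots> \<longleftrightarrow> U' = U"
      using Fl[OF that] assms(1,3,4) by (metis card_subset_eq finite_subset order_refl)
    finally show ?thesis .
  qed
  show ?thesis
  proof (intro set_eqI)
    fix y
    show "y \<in> {y \<in> {0..<n}. \<forall>x\<in>insert v U. adj ?H y x} \<longleftrightarrow>
        y \<in> {y \<in> {0..<n}. \<forall>x\<in>insert v U. adj G y x} \<union> (if U \<in> Fl then {f U} else {})"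
    proof (cases "y \<in> f ` Fl")
      case True
      then obtain U' where U': "U' \<in> Fl" "y = f U'" by blast
      have "y \<in> {y \<in> {0..<n}. \<forall>x\<in>insert v U. adj ?H y x} \<longleftrightarrow> U' = U"
        using adj_U adj_v trace[OF U'(1)] f[OF U'(1)] True U'(2) by auto
      moreover have "y \<notin> {y \<in> {0..<n}. \<forall>x\<in>insert v U. adj G y x}" using f[OF U'(1)] U'(2) by simp
      moreover have "U \<in> Fl \<and> y = f U \<longleftrightarrow> U' = U" using U' trace by metis
      ultimately show ?thesis by auto
    next
      case False
      then show ?thesis using adj_U adj_v by auto
    qed
  qed
qed

lemma insert_in_theta_add_star_iff:
  assumes v: "v < n" "v \<notin> S" and S: "S \<subseteq> {0..<n}" and U: "U \<subseteq> S" "card U = t - 1" "1 \<le> t"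
    and Fl: "\<And>U'. U' \<in> Fl \<Longrightarrow> U' \<subseteq> S \<and> card U' = t - 1"
    and f: "\<And>U'. U' \<in> Fl \<Longrightarrow> f U' < n \<and> f U' \<notin> S \<and> \<not> adj G (f U') v \<and> realizes G S (f U') U'"
  shows "insert v U \<in> theta t n (G \<union> star v (f ` Fl)) \<longleftrightarrow> (insert v U \<in> theta t n G \<longleftrightarrow> U \<notin> Fl)"
proof -
  let ?N = "\<lambda>H. {y \<in> {0..<n}. \<forall>x\<in>insert v U. adj H y x}"
  have finS: "finite S" using S finite_subset by blast
  have "finite U" "v \<notin> U" using U v finS finite_subset by auto
  then have "insert v U \<subseteq> {0..<n}" "card (insert v U) = t"
    using v S U by auto
  then have theta_iff: "insert v U \<in> theta t n H \<longleftrightarrow> odd (card (?N H))" for H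
    by (simp add: theta_def)
  have N: "?N (G \<union> star v (f ` Fl)) = ?N G \<union> (if U \<in> Fl then {f U} else {})"
    using finS v(2) U(1,2) Fl f by (rule common_neighbours_add_star)
  show ?thesis
  proof (cases "U \<in> Fl")
    case True
    then have "f U \<notin> ?N G" using f by auto
    then show ?thesis using True N theta_iff by simp
  next
    case False
    then show ?thesis using N theta_iff by simp
  qed
qed

lemma extension_vertex_after_flips:
  assumes v: "v < n" "v \<notin> S" and S: "S \<subseteq> {0..<n}" and "1 \<le> t"
    and f: "\<And>U. U \<subseteq> S \<Longrightarrow> card U = t - 1 \<Longrightarrow>
              f U < n \<and> f U \<notin> S \<and> \<not> adj G (f U) v \<and> realizes G S (f U) U"
  shows "extension_vertex t n
           (G \<union> star v (f ` {U. U \<subseteq> S \<and> card U = t - 1 \<and> (insert v U \<in> theta t n G \<longleftrightarrow> U \<notin> T)}))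
           S T v"
  unfolding extension_vertex_def
proof (intro allI impI)
  fix U assume "U \<subseteq> S" "card U = t - 1"
  with assms show "insert v U \<in> theta t n (G \<union> star v (f ` {U. U \<subseteq> S \<and> card U = t - 1 \<and>
      (insert v U \<in> theta t n G \<longleftrightarrow> U \<notin> T)})) \<longleftrightarrow> U \<in> T"
    by (subst insert_in_theta_add_star_iff) auto
qed

text \<open>
  Every configuration \<open>Ob\<close> of the edges from \<open>v\<close> to \<open>R\<close> that avoids the witness
  edges \<open>Y\<close> is completed to an extending one by adding the witness edges of the
  wrongly oriented sets; this completion is injective.
\<close>

lemma card_extension_configurations_ge:
  assumes v: "v < n" "v \<notin> S" "v \<notin> R" and S: "S \<subseteq> {0..<n}" and R: "R \<subseteq> {0..<n}"
    and "S \<inter> R = {}" "1 \<le> t" and A: "A \<inter> star v R = {}"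
    and f: "\<And>U. U \<subseteq> S \<Longrightarrow> card U = t - 1 \<Longrightarrow> f U \<in> R \<and> realizes A S (f U) U"
  shows "2 ^ card (star v R - star v (f ` {U. U \<subseteq> S \<and> card U = t - 1}))
    \<le> card {C \<in> Pow (star v R). extension_vertex t n (A \<union> C) S T v}"
proof -
  let ?Y = "star v (f ` {U. U \<subseteq> S \<and> card U = t - 1})"
  define flips where "flips Ob = star v (f ` {U. U \<subseteq> S \<and> card U = t - 1 \<and>
      (insert v U \<in> theta t n (A \<union> Ob) \<longleftrightarrow> U \<notin> T)})" for Ob
  have flips_Y: "flips Ob \<subseteq> ?Y" for Ob
    unfolding flips_def star_def by blast
  have Y_star: "?Y \<subseteq> star v R"
    using f unfolding star_def by blast
  have inj: "inj_on (\<lambda>Ob. Ob \<union> flips Ob) (Pow (star v R - ?Y))"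
  proof (rule inj_onI)
    fix Ob Ob' assume "Ob \<in> Pow (star v R - ?Y)" "Ob' \<in> Pow (star v R - ?Y)"
      and "Ob \<union> flips Ob = Ob' \<union> flips Ob'"
    then show "Ob = Ob'" using flips_Y[of Ob] flips_Y[of Ob'] by blast
  qed
  have "Ob \<union> flips Ob \<in> {C \<in> Pow (star v R). extension_vertex t n (A \<union> C) S T v}"
    if Ob: "Ob \<subseteq> star v R - ?Y" for Ob
  proof -
    have "f U < n \<and> f U \<notin> S \<and> \<not> adj (A \<union> Ob) (f U) v \<and> realizes (A \<union> Ob) S (f U) U"
      if U: "U \<subseteq> S" "card U = t - 1" for U
    proof -
      have fU: "f U \<in> R" "realizes A S (f U) U" using f[OF U] by auto
      have "{v, f U} \<in> ?Y" using U unfolding star_def by blast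
      then have "\<not> adj (A \<union> Ob) (f U) v"
        using A Ob Y_star by (auto simp: adj_def insert_commute)
      moreover have "realizes (A \<union> Ob) S (f U) U"
        using realizes_Un_star_iff[of Ob v R "f U" S A U] Ob fU v by auto
      ultimately show ?thesis using fU(1) R \<open>S \<inter> R = {}\<close> by auto
    qed
    then have "extension_vertex t n (A \<union> Ob \<union> flips Ob) S T v"
      unfolding flips_def using v S \<open>1 \<le> t\<close> by (intro extension_vertex_after_flips) auto
    moreover have "flips Ob \<subseteq> star v R" using flips_Y Y_star by blast
    ultimately show ?thesis using Ob by (auto simp: Un_assoc)
  qed
  moreover have fin: "finite (star v R)" using R finite_subset finite_star by blast
  ultimately have "card (Pow (star v R - ?Y)) \<le> card {C \<in> Pow (star v R). extension_vertex t n (A \<union> C) S T v}"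
    by (intro card_inj_on_le[OF inj]) auto
  then show ?thesis using fin by (simp add: card_Pow)
qed

section \<open>The failure probability\<close>

lemma card_trace_unrealized_le:
  assumes S: "S \<subseteq> {0..<n}" and R: "R \<subseteq> {0..<n}" and "S \<inter> R = {}" "U \<subseteq> S"
  shows "card {G \<in> Pow (vpairs n). \<forall>y\<in>R. \<not> realizes G S y U}
    \<le> (1 - (1/2) ^ card S) ^ card R * 2 ^ card (vpairs n)"
proof -
  define F where "F = vpairs n - (\<Union>y\<in>R. star y S)"
  have yS: "y \<notin> S" if "y \<in> R" for y using that \<open>S \<inter> R = {}\<close> by blast
  have finS: "finite S" using S finite_subset by blast
  have "card {G \<in> Pow (vpairs n). True \<and> (\<forall>y\<in>R. \<not> realizes G S y U)}
    \<le> (1 - (1/2) ^ card S) ^ card R * 2 ^ card (vpairs n)"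
  proof (rule card_Pow_all_fail_le[where Q = "\<lambda>_. True" and D = "\<lambda>y. star y S", OF finite_vpairs _ _ _ F_def])
    show "finite R" using R finite_subset by blast
    show "star y S \<subseteq> vpairs n" if "y \<in> R" for y
      using that R S yS by (intro star_subset_vpairs) auto
    show "star y S \<inter> star y' S = {}" if "y \<in> R" "y' \<in> R" "y \<noteq> y'" for y y'
      using that yS by (intro star_disjoint)
    show "realizes G S y U = realizes (G \<inter> (F \<union> star y S)) S y U" for y G
      by (rule realizes_cong) (simp add: adj_def doubleton_in_star_iff)
    show "(1/2) ^ card S * 2 ^ card (star y S) \<le> card {C \<in> Pow (star y S). realizes (A \<union> C) S y U}"
      if y: "y \<in> R" and A: "A \<subseteq> F" for y A
    proof -
      have "{y, x} \<notin> A" if "x \<in> S" for x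
        using A y that doubleton_in_star_iff[of y x S] unfolding F_def by blast
      then have "realizes (A \<union> star y U) S y U"
        unfolding realizes_def adj_def by (simp add: doubleton_in_star_iff)
      then have "star y U \<in> {C \<in> Pow (star y S). realizes (A \<union> C) S y U}"
        using \<open>U \<subseteq> S\<close> by (auto simp: star_def)
      moreover have "finite {C \<in> Pow (star y S). realizes (A \<union> C) S y U}"
        using finS by (simp add: finite_star)
      ultimately have "1 \<le> card {C \<in> Pow (star y S). realizes (A \<union> C) S y U}"
        by (simp add: Suc_le_eq card_gt_0_iff) blast
      moreover have "(1/2::real) ^ card S * 2 ^ card (star y S) \<le> 2 ^ (card (star y S) - card (star y S))"
        by (rule half_power_mult_le[OF card_star_le[OF finS] order_refl])
      ultimately show ?thesis by simp
    qed
  qed (simp add: power_le_one)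
  then show ?thesis by simp
qed

lemma card_traces_unrealized_le:
  assumes "S \<subseteq> {0..<n}" "R \<subseteq> {0..<n}" "S \<inter> R = {}"
  shows "card {G \<in> Pow (vpairs n). \<not> traces_realized G S R j}
    \<le> 2 ^ card S * ((1 - (1/2) ^ card S) ^ card R * 2 ^ card (vpairs n))"
proof -
  have finS: "finite S" using assms(1) finite_subset by blast
  have "card {G \<in> Pow (vpairs n). \<not> traces_realized G S R j}
      \<le> card (Pow S) * ((1 - (1/2) ^ card S) ^ card R * 2 ^ card (vpairs n))"
  proof (rule card_le_union_bound)
    show "{G \<in> Pow (vpairs n). \<not> traces_realized G S R j}
        \<subseteq> (\<Union>U\<in>Pow S. {G \<in> Pow (vpairs n). \<forall>y\<in>R. \<not> realizes G S y U})"
      by (auto simp: traces_realized_def)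
  qed (use finS assms card_trace_unrealized_le in \<open>auto simp: finite_vpairs\<close>)
  then show ?thesis using finS by (simp add: card_Pow)
qed

lemma card_extension_configurations_ge_fraction:
  assumes v: "v < n" "v \<notin> S" "v \<notin> R" and S: "S \<subseteq> {0..<n}" and R: "R \<subseteq> {0..<n}"
    and "S \<inter> R = {}" "1 \<le> t" and A: "A \<inter> star v R = {}"
    and traces: "traces_realized A S R (t - 1)"
  shows "(1/2) ^ (2 ^ card S) * 2 ^ card (star v R)
    \<le> card {C \<in> Pow (star v R). extension_vertex t n (A \<union> C) S T v}"
proof -
  have finS: "finite S" using S finite_subset by blast
  have finR: "finite R" using R finite_subset by blast
  obtain f where f: "\<And>U. U \<subseteq> S \<Longrightarrow> card U = t - 1 \<Longrightarrow> f U \<in> R \<and> realizes A S (f U) U"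
    using traces unfolding traces_realized_def by metis
  let ?Y = "star v (f ` {U. U \<subseteq> S \<and> card U = t - 1})"
  have finY: "finite ?Y" and Y_star: "?Y \<subseteq> star v R" using finS f by (auto simp: star_def)
  have "card ?Y \<le> card (f ` {U. U \<subseteq> S \<and> card U = t - 1})"
    using finS by (intro card_star_le) simp
  also have "\<dots> \<le> card {U. U \<subseteq> S \<and> card U = t - 1}"
    using finS by (intro card_image_le) simp
  also have "\<dots> \<le> card (Pow S)" using finS by (intro card_mono) auto
  finally have "card ?Y \<le> 2 ^ card S" using finS by (simp add: card_Pow)
  moreover have "card ?Y \<le> card (star v R)" using Y_star finR by (intro card_mono finite_star)
  ultimately have "(1/2::real) ^ (2 ^ card S) * 2 ^ card (star v R) \<le> 2 ^ (card (star v R) - card ?Y)"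
    by (rule half_power_mult_le)
  also have "\<dots> = 2 ^ card (star v R - ?Y)"
    using Y_star finY by (simp add: card_Diff_subset)
  also have "\<dots> \<le> card {C \<in> Pow (star v R). extension_vertex t n (A \<union> C) S T v}"
    using of_nat_mono[OF card_extension_configurations_ge[OF v S R assms(6,7) A f], where 'a = real]
    by simp
  finally show ?thesis .
qed

lemma card_no_extension_vertex_le:
  assumes S: "S \<subseteq> {0..<n}" and W: "W \<subseteq> {0..<n}" and R: "R \<subseteq> {0..<n}"
    and SW: "S \<inter> W = {}" and SR: "S \<inter> R = {}" and WR: "W \<inter> R = {}" and "1 \<le> t"
  shows "card {G \<in> Pow (vpairs n). traces_realized G S R (t - 1) \<and> (\<forall>v\<in>W. \<not> extension_vertex t n G S T v)}
    \<le> (1 - (1/2) ^ (2 ^ card S)) ^ card W * 2 ^ card (vpairs n)"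
proof -
  define F where "F = vpairs n - (\<Union>v\<in>W. star v R)"
  have RS_F: "{y, x} \<in> F" if "y \<in> R" "x \<in> S" for y x
  proof -
    have "{y, x} \<in> vpairs n" using that R S SR by (auto simp: doubleton_in_vpairs_iff)
    moreover have "{y, x} \<notin> star v R" if "v \<in> W" for v
      using that \<open>y \<in> R\<close> \<open>x \<in> S\<close> SW WR by (auto simp: star_def doubleton_eq_iff)
    ultimately show ?thesis unfolding F_def by blast
  qed
  have traces_F: "traces_realized (G \<inter> F) S R (t - 1) \<longleftrightarrow> traces_realized G S R (t - 1)" for G
    by (rule traces_realized_cong) (simp add: adj_def RS_F)
  have "card {G \<in> Pow (vpairs n). traces_realized (G \<inter> F) S R (t - 1) \<and> (\<forall>v\<in>W. \<not> extension_vertex t n G S T v)}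
    \<le> (1 - (1/2) ^ (2 ^ card S)) ^ card W * 2 ^ card (vpairs n)"
  proof (rule card_Pow_all_fail_le[where D = "\<lambda>v. star v R", OF finite_vpairs _ _ _ F_def])
    show "finite W" using W finite_subset by blast
    show "star v R \<subseteq> vpairs n" if "v \<in> W" for v
      using that W R WR by (intro star_subset_vpairs) auto
    show "star v R \<inter> star w R = {}" if "v \<in> W" "w \<in> W" "v \<noteq> w" for v w
      using that WR by (intro star_disjoint) auto
    show "extension_vertex t n G S T v = extension_vertex t n (G \<inter> (F \<union> star v R)) S T v"
      if v: "v \<in> W" and G: "G \<subseteq> vpairs n" for v G
    proof (rule extension_vertex_cong)
      fix y x assume x: "x \<in> insert v S"
      have "{y, x} \<in> F \<union> star v R" if yx: "{y, x} \<in> G"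
      proof (rule ccontr)
        assume "{y, x} \<notin> F \<union> star v R"
        then obtain w z where "w \<in> W" "z \<in> R" "w \<noteq> v" "{y, x} = {w, z}"
          using yx G unfolding F_def star_def by blast
        then show False using x v SW SR WR by (auto simp: doubleton_eq_iff)
      qed
      then show "adj G y x \<longleftrightarrow> adj (G \<inter> (F \<union> star v R)) y x" by (auto simp: adj_def)
    qed
    show "(1/2) ^ (2 ^ card S) * 2 ^ card (star v R)
        \<le> card {C \<in> Pow (star v R). extension_vertex t n (A \<union> C) S T v}"
      if "v \<in> W" "A \<subseteq> F" "traces_realized A S R (t - 1)" for v A
      using that S W R SW SR WR \<open>1 \<le> t\<close>
      by (intro card_extension_configurations_ge_fraction) (auto simp: F_def)
  qed (simp add: power_le_one)
  then show ?thesis unfolding traces_F .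
qed

lemma one_minus_half_power_le:
  assumes "m \<le> r"
  shows "(1 - (1/2::real) ^ k) ^ r \<le> (1 - (1/2) ^ 2 ^ k) ^ m"
proof -
  have "(1 - (1/2::real) ^ k) ^ r \<le> (1 - (1/2) ^ k) ^ m"
    using assms by (intro power_decreasing) (auto simp: power_le_one)
  also have "\<dots> \<le> (1 - (1/2) ^ 2 ^ k) ^ m"
  proof (intro power_mono)
    have "(1/2::real) ^ 2 ^ k \<le> (1/2) ^ k"
      using less_exp[of k] by (intro power_decreasing) auto
    then show "1 - (1/2::real) ^ k \<le> 1 - (1/2) ^ 2 ^ k" by simp
  qed (simp add: power_le_one)
  finally show ?thesis .
qed

lemma card_no_extension_vertex_outside_le:
  assumes S: "S \<subseteq> {0..<n}" and "card S = k" "1 \<le> t"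
  shows "card {G \<in> Pow (vpairs n). \<forall>v \<in> {0..<n} - S. \<not> extension_vertex t n G S T v}
    \<le> (2 ^ k + 1) * ((1 - (1/2) ^ 2 ^ k) ^ ((n - k) div 2) * 2 ^ card (vpairs n))"
proof -
  let ?m = "(n - k) div 2"
  let ?q = "1 - (1/2::real) ^ 2 ^ k"
  let ?E = "vpairs n"
  have finS: "finite S" using S finite_subset by blast
  \<comment> \<open>\<open>W\<close> supplies the candidate extension vertices, \<open>R\<close> the trace witnesses.\<close>
  have card_rest: "card ({0..<n} - S) = n - k"
    using S finS \<open>card S = k\<close> by (simp add: card_Diff_subset)
  then obtain W where W: "W \<subseteq> {0..<n} - S" "card W = ?m" "finite W"
    by (metis obtain_subset_with_card_n div_le_dividend)
  define R where "R = {0..<n} - S - W"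
  have "card R = (n - k) - ?m"
    unfolding R_def using W card_rest by (simp add: card_Diff_subset)
  then have "?m \<le> card R" by simp
  have "card {G \<in> Pow ?E. \<not> traces_realized G S R (t - 1)}
      \<le> 2 ^ k * ((1 - (1/2) ^ k) ^ card R * 2 ^ card ?E)"
    using card_traces_unrealized_le[of S n R] S W \<open>card S = k\<close> unfolding R_def by auto
  also have "\<dots> \<le> 2 ^ k * (?q ^ ?m * 2 ^ card ?E)"
    using one_minus_half_power_le[OF \<open>?m \<le> card R\<close>] by simp
  finally have bad_traces: "card {G \<in> Pow ?E. \<not> traces_realized G S R (t - 1)} \<le> 2 ^ k * (?q ^ ?m * 2 ^ card ?E)" .
  have bad_extension:
    "card {G \<in> Pow ?E. traces_realized G S R (t - 1) \<and> (\<forall>v\<in>W. \<not> extension_vertex t n G S T v)}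
      \<le> ?q ^ ?m * 2 ^ card ?E"
    using card_no_extension_vertex_le[of S n W R t T] S W \<open>card S = k\<close> \<open>1 \<le> t\<close>
    unfolding R_def by auto
  have "{G \<in> Pow ?E. \<forall>v \<in> {0..<n} - S. \<not> extension_vertex t n G S T v}
      \<subseteq> {G \<in> Pow ?E. \<not> traces_realized G S R (t - 1)} \<union>
        {G \<in> Pow ?E. traces_realized G S R (t - 1) \<and> (\<forall>v\<in>W. \<not> extension_vertex t n G S T v)}"
    using W(1) by blast
  then have "card {G \<in> Pow ?E. \<forall>v \<in> {0..<n} - S. \<not> extension_vertex t n G S T v}
      \<le> card ({G \<in> Pow ?E. \<not> traces_realized G S R (t - 1)} \<union>
        {G \<in> Pow ?E. traces_realized G S R (t - 1) \<and> (\<forall>v\<in>W. \<not> extension_vertex t n G S T v)})"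
    by (rule card_mono[rotated]) (simp add: finite_vpairs)
  also have "\<dots> \<le> card {G \<in> Pow ?E. \<not> traces_realized G S R (t - 1)} +
      card {G \<in> Pow ?E. traces_realized G S R (t - 1) \<and> (\<forall>v\<in>W. \<not> extension_vertex t n G S T v)}"
    by (rule card_Un_le)
  finally have "card {G \<in> Pow ?E. \<forall>v \<in> {0..<n} - S. \<not> extension_vertex t n G S T v}
      \<le> card {G \<in> Pow ?E. \<not> traces_realized G S R (t - 1)} +
        card {G \<in> Pow ?E. traces_realized G S R (t - 1) \<and> (\<forall>v\<in>W. \<not> extension_vertex t n G S T v)}" .
  from of_nat_mono[OF this, where 'a = real] show ?thesis
    using bad_traces bad_extension by (simp add: algebra_simps)
qed

lemma card_EA_fails_at_le:
  assumes S: "S \<subseteq> {0..<n}" and "card S = k" "1 \<le> t"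
  shows "card {G \<in> Pow (vpairs n). \<exists>T \<subseteq> {U. U \<subseteq> S \<and> card U = t - 1}.
                 \<forall>v \<in> {0..<n} - S. \<not> extension_vertex t n G S T v}
    \<le> 2 ^ 2 ^ k * ((2 ^ k + 1) * ((1 - (1/2) ^ 2 ^ k) ^ ((n - k) div 2) * 2 ^ card (vpairs n)))"
proof -
  let ?B = "{U. U \<subseteq> S \<and> card U = t - 1}"
  have finS: "finite S" using S finite_subset by blast
  have "card {G \<in> Pow (vpairs n). \<exists>T \<subseteq> ?B. \<forall>v \<in> {0..<n} - S. \<not> extension_vertex t n G S T v}
    \<le> card (Pow ?B) * ((2 ^ k + 1) * ((1 - (1/2) ^ 2 ^ k) ^ ((n - k) div 2) * 2 ^ card (vpairs n)))"
  proof (rule card_le_union_bound)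
    show "{G \<in> Pow (vpairs n). \<exists>T \<subseteq> ?B. \<forall>v \<in> {0..<n} - S. \<not> extension_vertex t n G S T v}
      \<subseteq> (\<Union>T\<in>Pow ?B. {G \<in> Pow (vpairs n). \<forall>v \<in> {0..<n} - S. \<not> extension_vertex t n G S T v})"
      by blast
  qed (use finS card_no_extension_vertex_outside_le[OF assms] in \<open>auto simp: finite_vpairs\<close>)
  also have "\<dots> \<le> 2 ^ 2 ^ k * ((2 ^ k + 1) * ((1 - (1/2) ^ 2 ^ k) ^ ((n - k) div 2) * 2 ^ card (vpairs n)))"
  proof (rule mult_right_mono)
    have "card ?B \<le> card (Pow S)" using finS by (intro card_mono) auto
    then have "card (Pow ?B) \<le> (2::nat) ^ 2 ^ k"
      using finS \<open>card S = k\<close> by (simp add: card_Pow)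
    from of_nat_mono[OF this, where 'a = real] show "real (card (Pow ?B)) \<le> 2 ^ 2 ^ k"
      by simp
  qed (simp add: power_le_one)
  finally show ?thesis .
qed

lemma fail_prob_le:
  assumes "1 \<le> t"
  shows "fail_prob t k n
    \<le> (n choose k) * (2 ^ 2 ^ k * ((2 ^ k + 1) * (1 - (1/2) ^ 2 ^ k) ^ ((n - k) div 2)))"
proof -
  let ?K = "2 ^ 2 ^ k * ((2 ^ k + 1) * (1 - (1/2::real) ^ 2 ^ k) ^ ((n - k) div 2))"
  let ?Ss = "{S. S \<subseteq> {0..<n} \<and> card S = k}"
  have "card {G \<in> graphs n. \<not> EA t k {0..<n} (theta t n G)} \<le> card ?Ss * (?K * 2 ^ card (vpairs n))"
  proof (rule card_le_union_bound)
    show "{G \<in> graphs n. \<not> EA t k {0..<n} (theta t n G)}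
      \<subseteq> (\<Union>S\<in>?Ss. {G \<in> Pow (vpairs n). \<exists>T \<subseteq> {U. U \<subseteq> S \<and> card U = t - 1}.
                 \<forall>v \<in> {0..<n} - S. \<not> extension_vertex t n G S T v})"
      unfolding graphs_def EA_def extension_vertex_def by blast
  qed (use card_EA_fails_at_le[OF _ _ assms] in \<open>auto simp: finite_vpairs mult.assoc\<close>)
  then show ?thesis
    unfolding fail_prob_def card_graphs using n_subsets[of "{0..<n}" k] by (simp add: divide_le_eq)
qed

section \<open>Negligibility\<close>

lemma poly_times_power_tendsto_zero:
  fixes r :: real
  assumes "0 < r" "r < 1"
  shows "(\<lambda>n. real n ^ d * r ^ n) \<longlonglongrightarrow> 0"
proof -
  define s where "s = root (Suc d) r"
  have "0 < s" "s < 1"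
    using assms by (simp_all add: s_def real_root_gt_zero)
  have "s ^ Suc d = r"
    unfolding s_def using assms by (intro real_root_pow_pos) auto
  have "(\<lambda>n. (real n * s ^ n) ^ Suc d) \<longlonglongrightarrow> 0 ^ Suc d"
    using powser_times_n_limit_0[of s] \<open>0 < s\<close> \<open>s < 1\<close> by (intro tendsto_power) simp
  moreover have "(\<lambda>n. (real n * s ^ n) ^ Suc d) = (\<lambda>n. real n ^ Suc d * r ^ n)"
    unfolding \<open>s ^ Suc d = r\<close>[symmetric] by (rule ext) (metis power_mult power_mult_distrib mult.commute)
  ultimately have lim: "(\<lambda>n. real n ^ Suc d * r ^ n) \<longlonglongrightarrow> 0"
    by (simp only: power_0_Suc)
  show ?thesis
  proof (rule tendsto_sandwich[OF _ _ tendsto_const lim])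
    show "\<forall>\<^sub>F n in sequentially. 0 \<le> real n ^ d * r ^ n" using assms by simp
    show "\<forall>\<^sub>F n in sequentially. real n ^ d * r ^ n \<le> real n ^ Suc d * r ^ n"
      using eventually_ge_at_top[of 1]
      by eventually_elim (use assms in \<open>auto intro!: mult_right_mono power_increasing\<close>)
  qed
qed

lemma negligible_if_poly_times_power_bound:
  fixes f :: "nat \<Rightarrow> real" and C r :: real
  assumes "0 < r" "r < 1"
    and bound: "\<forall>\<^sub>F n in sequentially. 0 \<le> f n \<and> f n \<le> C * real n ^ d * r ^ n"
  shows "negligible f"
  unfolding negligible_def
proof
  fix c :: nat
  have "(\<lambda>n. (\<bar>C\<bar> + 1) * (real n ^ (d + c) * r ^ n)) \<longlonglongrightarrow> 0"
    using poly_times_power_tendsto_zero[OF assms(1,2)] by (rule tendsto_mult_right_zero)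
  then have "\<forall>\<^sub>F n in sequentially. (\<bar>C\<bar> + 1) * (real n ^ (d + c) * r ^ n) < 1"
    by (rule order_tendstoD) simp
  then show "\<forall>\<^sub>F n in sequentially. \<bar>f n\<bar> < 1 / real n ^ c"
    using bound eventually_gt_at_top[of 0]
  proof eventually_elim
    case (elim n)
    have "f n * real n ^ c \<le> C * real n ^ d * r ^ n * real n ^ c"
      using elim by (intro mult_right_mono) auto
    also have "\<dots> = C * (real n ^ (d + c) * r ^ n)"
      by (simp add: power_add)
    also have "\<dots> \<le> (\<bar>C\<bar> + 1) * (real n ^ (d + c) * r ^ n)"
      using \<open>0 < r\<close> by (intro mult_right_mono) auto
    also have "\<dots> < 1" using elim by simp
    finally show ?case using elim by (simp add: field_simps)
  qed
qed

lemma power_half_diff_le: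
  fixes q :: real
  assumes "0 < q" "q \<le> 1" "k < n"
  shows "q ^ ((n - k) div 2) \<le> sqrt q ^ n / sqrt q ^ (k + 1)"
proof -
  have "q ^ ((n - k) div 2) = sqrt q ^ (2 * ((n - k) div 2))"
    using assms by (simp add: power_mult)
  also have "\<dots> \<le> sqrt q ^ (n - (k + 1))"
    using assms by (intro power_decreasing) auto
  also have "\<dots> = sqrt q ^ n / sqrt q ^ (k + 1)"
    using assms by (simp add: power_diff)
  finally show ?thesis .
qed

lemma fail_prob_le_poly_times_power:
  fixes k t n :: nat and q :: real
  defines "q \<equiv> 1 - (1/2) ^ 2 ^ k"
  assumes "1 \<le> t" "k < n"
  shows "fail_prob t k n \<le> 2 ^ 2 ^ k * (2 ^ k + 1) / sqrt q ^ (k + 1) * real n ^ k * sqrt q ^ n"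
proof -
  have "0 < q" "q < 1"
    unfolding q_def by (simp_all add: power_less_one_iff)
  have "fail_prob t k n \<le> (n choose k) * (2 ^ 2 ^ k * ((2 ^ k + 1) * q ^ ((n - k) div 2)))"
    using fail_prob_le[OF \<open>1 \<le> t\<close>] by (simp add: q_def)
  also have "\<dots> \<le> real n ^ k * (2 ^ 2 ^ k * ((2 ^ k + 1) * (sqrt q ^ n / sqrt q ^ (k + 1))))"
  proof (rule mult_mono)
    show "real (n choose k) \<le> real n ^ k"
      using of_nat_mono[OF binomial_le_pow[of k n], where 'a = real] \<open>k < n\<close> by simp
    show "2 ^ 2 ^ k * ((2 ^ k + 1) * q ^ ((n - k) div 2))
        \<le> 2 ^ 2 ^ k * ((2 ^ k + 1) * (sqrt q ^ n / sqrt q ^ (k + 1)))"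
      using power_half_diff_le[of q k n] \<open>0 < q\<close> \<open>q < 1\<close> \<open>k < n\<close>
      by (intro mult_left_mono) auto
  qed (use \<open>0 < q\<close> in auto)
  finally show ?thesis by (simp add: field_simps)
qed

theorem mainTheorem15:
  fixes k t :: nat
  assumes "k \<ge> 1" and "t \<ge> 2"
  shows "negligible (fail_prob t k)"
proof -
  let ?q = "1 - (1/2::real) ^ 2 ^ k"
  have "0 < sqrt ?q" "sqrt ?q < 1"
    by (simp_all add: power_less_one_iff)
  moreover have "\<forall>\<^sub>F n in sequentially. 0 \<le> fail_prob t k n \<and>
      fail_prob t k n \<le> 2 ^ 2 ^ k * (2 ^ k + 1) / sqrt ?q ^ (k + 1) * real n ^ k * sqrt ?q ^ n"
    using eventually_gt_at_top[of k]
  proof eventually_elim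
    case (elim n)
    then show ?case
      using fail_prob_le_poly_times_power[of t k n] \<open>t \<ge> 2\<close> by (simp add: fail_prob_def)
  qed
  ultimately show ?thesis by (rule negligible_if_poly_times_power_bound)
qed

end
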